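(* Let $p$ be an odd prime, $k\geq 2$ an integer, $R=\mathbb{Z}/p^k\mathbb{Z}$, and $\widehat{X}=\mathrm{SL}_2(R)$. Let $w\in R^\times$ have order $p-1$. Let $$P=\left\{I+p^{k-1}\begin{pmatrix}0&b\\c&0\end{pmatrix}: b,c\in R\right\},\quad Q=\left\langle\begin{pmatrix}w&0\\0&w^{-1}\end{pmatrix},\begin{pmatrix}0&1\\-1&0\end{pmatrix}\right\rangle,$$ and $\widehat{Y}=\langle P,Q\rangle$. Let $\varphi:\widehat{X}\to\mathrm{SL}_2(p)$ be the epimorphism induced by the natural ring epimorphism $R\to\mathbb{F}_p$, let $\widehat{N}=\ker\varphi$, and let $Z=\{\pm I\}$. Let $X=\widehat{X}/Z$, $Y=\widehat{Y}/Z$ and $N=\widehat{N}Z/Z$. Then $N\cong\widehat{N}$; $\widehat{N}$ has a chain of subgroups $\widehat{N}=N_1>N_2>\cdots>N_k=1$, each normal in $\widehat{X}$, with $N_\ell/N_{\ell+1}\cong\mathrm{C}_p^3$ for every $\ell\in\{1,\ldots,k-1\}$; and $Y\cap N=PZ/Z\cong\mathrm{C}_p^2$.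
   Context: $I$ is the $2\times 2$ identity matrix and $\mathrm{C}_n$ the cyclic group of order $n$. *)

theory Defs
  imports "HOL-Algebra.Algebra" "HOL-Number_Theory.Number_Theory"
begin

text \<open>A 2x2 matrix (a b; c d) over Z/mZ is represented by the tuple (a,b,c,d) of
  integer representatives in {0..<m}.\<close>
type_synonym mat2 = "int \<times> int \<times> int \<times> int"

definition mat_mult_mod :: "int \<Rightarrow> mat2 \<Rightarrow> mat2 \<Rightarrow> mat2" where
  "mat_mult_mod m A B = (case A of (a1,a2,a3,a4) \<Rightarrow> case B of (b1,b2,b3,b4) \<Rightarrow>
     ((a1*b1 + a2*b3) mod m, (a1*b2 + a2*b4) mod m, (a3*b1 + a4*b3) mod m, (a3*b2 + a4*b4) mod m))"

definition SL2 :: "int \<Rightarrow> mat2 monoid" where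
  "SL2 m = \<lparr> carrier = {(a1,a2,a3,a4). a1 \<in> {0..<m} \<and> a2 \<in> {0..<m} \<and> a3 \<in> {0..<m} \<and> a4 \<in> {0..<m}
                                    \<and> (a1*a4 - a2*a3) mod m = 1 mod m},
            monoid.mult = mat_mult_mod m,
            one = (1 mod m, 0, 0, 1 mod m) \<rparr>"

definition reduce_mod :: "int \<Rightarrow> mat2 \<Rightarrow> mat2" where
  "reduce_mod n A = (case A of (a1,a2,a3,a4) \<Rightarrow> (a1 mod n, a2 mod n, a3 mod n, a4 mod n))"

definition centre_pm :: "int \<Rightarrow> mat2 set" where
  "centre_pm m = {(1 mod m, 0, 0, 1 mod m), ((-1) mod m, 0, 0, (-1) mod m)}"

definition Pgrp :: "int \<Rightarrow> nat \<Rightarrow> mat2 set" where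
  "Pgrp p k = {(1 mod p^k, (p^(k-1) * b) mod p^k, (p^(k-1) * c) mod p^k, 1 mod p^k) | b c.
                 b \<in> {0..<p^k} \<and> c \<in> {0..<p^k}}"

definition inv_modm :: "int \<Rightarrow> int \<Rightarrow> int" where
  "inv_modm m w = (THE v. v \<in> {0..<m} \<and> (w * v) mod m = 1 mod m)"

definition Qgens :: "int \<Rightarrow> int \<Rightarrow> mat2 set" where
  "Qgens m w = {(w mod m, 0, 0, inv_modm m w), (0, 1 mod m, (-1) mod m, 0)}"

abbreviation cyc :: "nat \<Rightarrow> int monoid" where
  "cyc n \<equiv> integer_mod_group n"

end

theory Submission
  imports Defs
begin

text \<open>
  The congruence subgroups \<open>N\<^sub>l\<close>, kernels of reduction \<open>SL\<^sub>2(\<int>/p\<^sup>k) \<rightarrow> SL\<^sub>2(\<int>/p\<^sup>l)\<close>,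
  form the chain.  Writing an element of \<open>N\<^sub>l\<close> as \<open>I + p\<^sup>l A\<close>, the map to the three
  entries \<open>a, b, c\<close> of \<open>A\<close> modulo \<open>p\<close> (the fourth is then fixed by the determinant) is a
  homomorphism onto \<open>C\<^sub>p\<^sup>3\<close> with kernel \<open>N\<^sub>l\<^sub>+\<^sub>1\<close>, because for \<open>l \<ge> 1\<close> the product
  \<open>(I + p\<^sup>l A)(I + p\<^sup>l B)\<close> is \<open>I + p\<^sup>l (A + B)\<close> modulo \<open>p\<^sup>l\<^sup>+\<^sup>1\<close>.
  As \<open>p\<close> is odd, \<open>-I\<close> is not congruent to \<open>I\<close> modulo \<open>p\<close>, so \<open>Z = {\<plusminus>I}\<close> meets \<open>N\<^sub>1\<close>
  trivially and \<open>N\<^sub>1\<close> and \<open>P\<close> map isomorphically into the quotient by \<open>Z\<close>.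

  For \<open>Y \<inter> N\<close>: the generators of \<open>Y\<close>, and \<open>\<plusminus>I\<close>, are monomial modulo \<open>p\<^sup>k\<^sup>-\<^sup>1\<close> with
  nonzero entries among the \<open>(p - 1)\<close>-th roots of unity modulo \<open>p\<^sup>k\<close>.  These matrices form
  a subgroup, since the product of two entries divisible by \<open>p\<^sup>k\<^sup>-\<^sup>1\<close> vanishes modulo
  \<open>p\<^sup>k\<close>.  A root of unity of order prime to \<open>p\<close> that is \<open>1\<close> modulo \<open>p\<close> is \<open>1\<close>, so such a
  matrix in \<open>N\<^sub>1\<close> lies in \<open>P\<close>.
\<close>

lemma mod_mult_add_mod_left: "(a mod m * b + c mod m * d) mod m = (a * b + c * d) mod (m :: int)"
  by (metis mod_add_eq mod_mult_left_eq)

lemma mod_mult_add_mod_right: "(a * (b mod m) + c * (d mod m)) mod m = (a * b + c * d) mod (m :: int)"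
  by (metis mod_add_eq mod_mult_right_eq)

lemma det_mod_cong:
  "[(a mod m) * (d mod m) - (b mod m) * (c mod m) = a * d - b * (c :: int)] (mod m)"
  unfolding cong_def by (metis mod_diff_eq mod_mult_eq)

lemma cong_det_one_diagonal:
  fixes a b c d n :: int
  assumes "[a * d - b * c = 1] (mod n)" "[a = 1] (mod n)" "n dvd b"
  shows "[d = 1] (mod n)"
proof -
  have "[a * d - b * c = 1 * d - 0 * c] (mod n)"
    using assms(2,3) by (intro cong_diff cong_mult) (auto simp: cong_0_iff)
  then show ?thesis
    using assms(1) by (metis cong_sym cong_trans mult_1 mult_zero_left diff_zero)
qed

lemma div_mod_eq_if_cong:
  fixes q p x c u :: int
  assumes "q \<noteq> 0" "[x = c + q * u] (mod q * p)"
  shows "((x - c) div q) mod p = u mod p"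
proof -
  obtain t where "x - (c + q * u) = q * p * t"
    using assms(2) by (metis cong_iff_dvd_diff dvdE)
  then have "x - c = q * (u + p * t)"
    by (simp add: algebra_simps)
  then show ?thesis
    using assms(1) by simp
qed

lemma cong_one_prime_power_if_cong_pow:
  fixes a p :: int
  assumes "Factorial_Ring.prime p" "[a = 1] (mod p)" "\<not> p dvd int n" "[a ^ n = 1] (mod p ^ k)"
  shows "[a = 1] (mod p ^ k)"
proof -
  have "[(\<Sum>i<n. a ^ i) = (\<Sum>i<n. 1 ^ i)] (mod p)"
    using assms(2) by (intro cong_sum cong_pow)
  then have "\<not> p dvd (\<Sum>i<n. a ^ i)"
    using assms(3) by (simp add: cong_dvd_iff)
  then have "coprime (p ^ k) (\<Sum>i<n. a ^ i)"
    using assms(1) by (simp add: prime_imp_coprime)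
  moreover have "p ^ k dvd (a - 1) * (\<Sum>i<n. a ^ i)"
    using assms(4) by (simp add: cong_iff_dvd_diff power_diff_1_eq[symmetric])
  ultimately show ?thesis
    by (simp add: cong_iff_dvd_diff coprime_dvd_mult_left_iff)
qed

lemma inv_modm_correct:
  assumes "coprime w m" "m > 1"
  shows "inv_modm m w \<in> {0..<m}" "[w * inv_modm m w = 1] (mod m)"
proof -
  obtain v where v: "[w * v = 1] (mod m)"
    using cong_solve_coprime_int[OF assms(1)] by blast
  have "\<exists>!u. u \<in> {0..<m} \<and> (w * u) mod m = 1 mod m"
  proof (rule ex1I)
    show "v mod m \<in> {0..<m} \<and> (w * (v mod m)) mod m = 1 mod m"
      using v assms(2) by (simp add: cong_def mod_mult_right_eq)
  next
    fix u assume "u \<in> {0..<m} \<and> (w * u) mod m = 1 mod m"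
    then have "[w * u = w * v] (mod m)"
      using v by (simp add: cong_def)
    then have "[u = v] (mod m)"
      using cong_mult_lcancel[OF assms(1)] by simp
    with \<open>u \<in> {0..<m} \<and> _\<close> show "u = v mod m"
      by (simp add: cong_def)
  qed
  from theI'[OF this] show "inv_modm m w \<in> {0..<m}" "[w * inv_modm m w = 1] (mod m)"
    by (simp_all add: inv_modm_def cong_def)
qed

lemma (in group) FactGroup_image_iso:
  assumes "Z \<lhd> G" "subgroup H G" "H \<inter> Z \<subseteq> {\<one>}"
  shows "(G Mod Z)\<lparr>carrier := (\<lambda>g. Z #> g) ` H\<rparr> \<cong> G\<lparr>carrier := H\<rparr>"
proof -
  interpret Z: normal Z G by fact
  have "group_hom G (G Mod Z) (\<lambda>g. Z #> g)"
    by (simp add: group_hom_def group_hom_axioms_def Z.factorgroup_is_group Z.r_coset_hom_Mod)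
  then interpret coset_map:
    group_hom "G\<lparr>carrier := H\<rparr>" "(G Mod Z)\<lparr>carrier := (\<lambda>g. Z #> g) ` H\<rparr>" "\<lambda>g. Z #> g"
    using group_hom.induced_group_hom[OF _ assms(2)] by blast
  have "x = \<one>" if "x \<in> H" "Z #> x = Z" for x
  proof -
    have "x \<in> Z"
      using that coset_join1 Z.subgroup_axioms subgroup.mem_carrier[OF assms(2)] by blast
    then show ?thesis
      using that(1) assms(3) by blast
  qed
  then have "(\<lambda>g. Z #> g) \<in> iso (G\<lparr>carrier := H\<rparr>) ((G Mod Z)\<lparr>carrier := (\<lambda>g. Z #> g) ` H\<rparr>)"
    unfolding coset_map.iso_iff by simp
  then show ?thesis
    using group.iso_sym[OF subgroup.subgroup_is_group[OF assms(2) is_group]] by (auto simp: is_iso_def)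
qed

section \<open>SL2 over Z/mZ\<close>

lemma carrier_SL2:
  "(a, b, c, d) \<in> carrier (SL2 m) \<longleftrightarrow>
     a \<in> {0..<m} \<and> b \<in> {0..<m} \<and> c \<in> {0..<m} \<and> d \<in> {0..<m} \<and> [a * d - b * c = 1] (mod m)"
  by (simp add: SL2_def cong_def)

lemma mult_SL2 [simp]: "x \<otimes>\<^bsub>SL2 m\<^esub> y = mat_mult_mod m x y"
  by (simp add: SL2_def)

lemma one_SL2: "m > 1 \<Longrightarrow> \<one>\<^bsub>SL2 m\<^esub> = (1, 0, 0, 1)"
  by (simp add: SL2_def)

lemma mat_mult_mod_simps:
  "mat_mult_mod m (a1, a2, a3, a4) (b1, b2, b3, b4) =
     ((a1 * b1 + a2 * b3) mod m, (a1 * b2 + a2 * b4) mod m,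
      (a3 * b1 + a4 * b3) mod m, (a3 * b2 + a4 * b4) mod m)"
  by (simp add: mat_mult_mod_def)

lemma mat_mult_mod_assoc:
  "mat_mult_mod m (mat_mult_mod m x y) z = mat_mult_mod m x (mat_mult_mod m y z)"
  by (cases x; cases y; cases z)
    (simp only: mat_mult_mod_simps mod_mult_add_mod_left mod_mult_add_mod_right prod.inject;
     simp add: algebra_simps)

lemma det_mat_mult_mod:
  "[(a1 * b1 + a2 * b3) mod m * ((a3 * b2 + a4 * b4) mod m)
      - (a1 * b2 + a2 * b4) mod m * ((a3 * b1 + a4 * b3) mod m)
     = (a1 * a4 - a2 * a3) * (b1 * b4 - b2 * (b3 :: int))] (mod m)"
proof -
  have "(a1 * b1 + a2 * b3) * (a3 * b2 + a4 * b4) - (a1 * b2 + a2 * b4) * (a3 * b1 + a4 * b3)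
      = (a1 * a4 - a2 * a3) * (b1 * b4 - b2 * b3)"
    by (simp add: algebra_simps)
  then show ?thesis using det_mod_cong by metis
qed

lemma mat_mult_mod_closed:
  assumes "x \<in> carrier (SL2 m)" "y \<in> carrier (SL2 m)" "m > 1"
  shows "mat_mult_mod m x y \<in> carrier (SL2 m)"
proof -
  obtain a1 a2 a3 a4 b1 b2 b3 b4 where "x = (a1, a2, a3, a4)" "y = (b1, b2, b3, b4)"
    by (cases x; cases y) auto
  with assms show ?thesis
    using det_mat_mult_mod[of a1 b1 a2 b3 m a3 b2 a4 b4] cong_mult[of _ 1 m _ 1]
    by (auto simp: carrier_SL2 mat_mult_mod_simps intro: cong_trans)
qed

lemma mat_mult_mod_reduce_left: "mat_mult_mod m (reduce_mod m x) y = mat_mult_mod m x y"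
  by (cases x; cases y) (simp add: reduce_mod_def mat_mult_mod_simps mod_mult_add_mod_left)

lemma mat_mult_mod_reduce_right: "mat_mult_mod m x (reduce_mod m y) = mat_mult_mod m x y"
  by (cases x; cases y) (simp add: reduce_mod_def mat_mult_mod_simps mod_mult_add_mod_right)

lemma reduce_mod_mat_mult_mod:
  "n dvd m \<Longrightarrow> reduce_mod n (mat_mult_mod m x y) = mat_mult_mod n (reduce_mod n x) (reduce_mod n y)"
  by (simp add: mat_mult_mod_reduce_left mat_mult_mod_reduce_right)
    (simp add: mat_mult_mod_def reduce_mod_def mod_mod_cancel split: prod.splits)

lemma SL2_adjugate:
  assumes "(a, b, c, d) \<in> carrier (SL2 m)"
  shows "(d, (-b) mod m, (-c) mod m, a) \<in> carrier (SL2 m)"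
    and "mat_mult_mod m (d, (-b) mod m, (-c) mod m, a) (a, b, c, d) = (1 mod m, 0, 0, 1 mod m)"
proof -
  have range: "a \<in> {0..<m}" "d \<in> {0..<m}" and det: "[a * d - b * c = 1] (mod m)"
    using assms by (auto simp: carrier_SL2)
  have "[d * a - (-b) mod m * ((-c) mod m) = d * a - (-b) * (-c)] (mod m)"
    using det_mod_cong[of d m a "-b" "-c"] range by simp
  with det show "(d, (-b) mod m, (-c) mod m, a) \<in> carrier (SL2 m)"
    using range by (auto simp: carrier_SL2 mult.commute intro: cong_trans)
  have "reduce_mod m (d, -b, -c, a) = (d, (-b) mod m, (-c) mod m, a)"
    using range by (simp add: reduce_mod_def)
  then have "mat_mult_mod m (d, (-b) mod m, (-c) mod m, a) (a, b, c, d) = mat_mult_mod m (d, -b, -c, a) (a, b, c, d)"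
    by (metis mat_mult_mod_reduce_left)
  with det show "mat_mult_mod m (d, (-b) mod m, (-c) mod m, a) (a, b, c, d) = (1 mod m, 0, 0, 1 mod m)"
    by (simp add: mat_mult_mod_simps cong_def algebra_simps)
qed

lemma group_SL2:
  assumes "m > 1"
  shows "group (SL2 m)"
proof (rule groupI)
  fix x assume x: "x \<in> carrier (SL2 m)"
  then show "\<one>\<^bsub>SL2 m\<^esub> \<otimes>\<^bsub>SL2 m\<^esub> x = x"
    using assms by (cases x) (simp add: one_SL2 carrier_SL2 mat_mult_mod_simps)
  obtain a b c d where "x = (a, b, c, d)"
    by (cases x)
  with x SL2_adjugate[of a b c d m] assms
  show "\<exists>y\<in>carrier (SL2 m). y \<otimes>\<^bsub>SL2 m\<^esub> x = \<one>\<^bsub>SL2 m\<^esub>"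
    by (auto simp: one_SL2)
qed (use assms in \<open>auto simp: one_SL2 carrier_SL2 mat_mult_mod_assoc mat_mult_mod_closed\<close>)

lemma inv_SL2:
  assumes "m > 1" "(a, b, c, d) \<in> carrier (SL2 m)"
  shows "inv\<^bsub>SL2 m\<^esub> (a, b, c, d) = (d, (-b) mod m, (-c) mod m, a)"
  using group.inv_equality[OF group_SL2[OF assms(1)]] SL2_adjugate[OF assms(2)] assms
  by (simp add: one_SL2)

lemma group_hom_reduce_mod:
  assumes "n > 1" "n dvd m" "m > 1"
  shows "group_hom (SL2 m) (SL2 n) (reduce_mod n)"
proof -
  have "reduce_mod n (a, b, c, d) \<in> carrier (SL2 n)" if "(a, b, c, d) \<in> carrier (SL2 m)" for a b c d
  proof -
    have "[a * d - b * c = 1] (mod n)"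
      using that assms(2) cong_dvd_modulus by (auto simp: carrier_SL2)
    then show ?thesis
      using assms(1) det_mod_cong[of a n d b c] by (auto simp: carrier_SL2 reduce_mod_def intro: cong_trans)
  qed
  then have "reduce_mod n \<in> hom (SL2 m) (SL2 n)"
    using assms(2) by (auto intro!: homI simp: reduce_mod_mat_mult_mod)
  then show ?thesis
    using assms group_SL2 by (simp add: group_hom_def group_hom_axioms_def)
qed

lemma mat_mult_mod_scalar_commute: "mat_mult_mod m (e, 0, 0, e) x = mat_mult_mod m x (e, 0, 0, e)"
  by (cases x) (simp add: mat_mult_mod_simps mult.commute)

lemma centre_pm_eq: "m > 1 \<Longrightarrow> centre_pm m = {(1, 0, 0, 1), (m - 1, 0, 0, m - 1)}"
  by (simp add: centre_pm_def zmod_minus1)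

lemma normal_centre_pm:
  assumes "m > 1"
  shows "centre_pm m \<lhd> SL2 m"
proof -
  interpret group "SL2 m" using group_SL2[OF assms] .
  have "(m - 1) * (m - 1) = 1 + m * (m - 2)"
    by (simp add: algebra_simps)
  then have minus_one_squared: "((m - 1) * (m - 1)) mod m = 1"
    using assms by simp
  have carrier: "centre_pm m \<subseteq> carrier (SL2 m)"
    using assms minus_one_squared by (auto simp: centre_pm_eq carrier_SL2 cong_def)
  have "subgroup (centre_pm m) (SL2 m)"
  proof (rule subgroupI)
    fix x y assume "x \<in> centre_pm m" "y \<in> centre_pm m"
    then show "inv\<^bsub>SL2 m\<^esub> x \<in> centre_pm m" and "x \<otimes>\<^bsub>SL2 m\<^esub> y \<in> centre_pm m"
      using carrier inv_SL2[OF assms] assms minus_one_squared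
      by (auto simp: centre_pm_eq mat_mult_mod_simps zmod_minus1)
  qed (use carrier in \<open>auto simp: centre_pm_def\<close>)
  moreover have "centre_pm m #>\<^bsub>SL2 m\<^esub> x = x <#\<^bsub>SL2 m\<^esub> centre_pm m" for x
    using mat_mult_mod_scalar_commute[of m] assms
    by (auto simp: r_coset_def l_coset_def centre_pm_eq)
  ultimately show ?thesis
    by (auto intro: normalI)
qed

section \<open>The congruence filtration\<close>

locale SL2_prime_power =
  fixes p :: int and k :: nat
  assumes prime: "Factorial_Ring.prime p"
begin

lemma p_gt_1: "p > 1"
  using prime prime_gt_1_int by blast

lemma power_gt_1: "l \<ge> 1 \<Longrightarrow> p ^ l > 1"
  using p_gt_1 by simp

definition congruence_subgroup :: "nat \<Rightarrow> mat2 set" where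
  "congruence_subgroup l = kernel (SL2 (p ^ k)) (SL2 (p ^ l)) (reduce_mod (p ^ l))"

lemma mem_congruence_subgroup:
  "(a, b, c, d) \<in> congruence_subgroup l \<longleftrightarrow>
     (a, b, c, d) \<in> carrier (SL2 (p ^ k)) \<and>
     [a = 1] (mod p ^ l) \<and> p ^ l dvd b \<and> p ^ l dvd c \<and> [d = 1] (mod p ^ l)"
  by (auto simp: congruence_subgroup_def kernel_def reduce_mod_def SL2_def cong_def)

lemma congruence_subgroup_subset_carrier: "congruence_subgroup l \<subseteq> carrier (SL2 (p ^ k))"
  by (auto simp: congruence_subgroup_def kernel_def)

lemma normal_congruence_subgroup:
  "1 \<le> l \<Longrightarrow> l \<le> k \<Longrightarrow> congruence_subgroup l \<lhd> SL2 (p ^ k)"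
  unfolding congruence_subgroup_def
  by (intro group_hom.normal_kernel group_hom_reduce_mod power_gt_1 le_imp_power_dvd) auto

lemma congruence_subgroup_antimono:
  "l \<le> n \<Longrightarrow> congruence_subgroup n \<subseteq> congruence_subgroup l"
proof (clarsimp simp: subset_iff mem_congruence_subgroup)
  fix a b c d assume "l \<le> n" "[a = 1] (mod p ^ n)" "p ^ n dvd b" "p ^ n dvd c" "[d = 1] (mod p ^ n)"
  then show "[a = 1] (mod p ^ l) \<and> p ^ l dvd b \<and> p ^ l dvd c \<and> [d = 1] (mod p ^ l)"
    using le_imp_power_dvd[of l n p] cong_dvd_modulus dvd_trans by blast
qed

lemma congruence_subgroup_top:
  assumes "k \<ge> 1"
  shows "congruence_subgroup k = {\<one>\<^bsub>SL2 (p ^ k)\<^esub>}"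
proof -
  have "x \<in> congruence_subgroup k \<longleftrightarrow> x = (1, 0, 0, 1)" for x
  proof (cases x)
    case (fields a b c d)
    have "u = v" if "[u = v] (mod p ^ k)" "u \<in> {0..<p ^ k}" "v \<in> {0..<p ^ k}" for u v
      using that cong_less_imp_eq_int by auto
    then show ?thesis
      using power_gt_1[OF assms] fields
      by (auto simp: mem_congruence_subgroup carrier_SL2 cong_0_iff[symmetric])
  qed
  then show ?thesis
    using power_gt_1[OF assms] by (auto simp: one_SL2)
qed

abbreviation Cp3 :: "(int \<times> int \<times> int) monoid" where
  "Cp3 \<equiv> cyc (nat p) \<times>\<times> cyc (nat p) \<times>\<times> cyc (nat p)"

lemma carrier_cyc: "carrier (cyc (nat p)) = {0..<p}"
  using p_gt_1 by (simp add: carrier_integer_mod_group)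

lemma mult_Cp3:
  "(x1, x2, x3) \<otimes>\<^bsub>Cp3\<^esub> (y1, y2, y3) = ((x1 + y1) mod p, (x2 + y2) mod p, (x3 + y3) mod p)"
  using p_gt_1 by (simp add: DirProd_def)

definition level_coords :: "nat \<Rightarrow> mat2 \<Rightarrow> int \<times> int \<times> int" where
  "level_coords l = (\<lambda>(a, b, c, d). (((a - 1) div p ^ l) mod p, (b div p ^ l) mod p, (c div p ^ l) mod p))"

lemma level_coords_in_carrier: "level_coords l x \<in> carrier Cp3"
  using p_gt_1 by (auto simp: level_coords_def DirProd_def carrier_cyc split: prod.splits)

lemma congruence_subgroup_elem:
  assumes "x \<in> congruence_subgroup l"
  obtains \<alpha>1 \<alpha>2 \<alpha>3 \<alpha>4 where "x = (1 + p ^ l * \<alpha>1, p ^ l * \<alpha>2, p ^ l * \<alpha>3, 1 + p ^ l * \<alpha>4)"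
proof (cases x)
  case (fields a b c d)
  with assms have "p ^ l dvd a - 1" "p ^ l dvd b" "p ^ l dvd c" "p ^ l dvd d - 1"
    by (auto simp: mem_congruence_subgroup cong_iff_dvd_diff)
  then obtain t1 t2 t3 t4 where t: "a - 1 = p ^ l * t1" "b = p ^ l * t2" "c = p ^ l * t3" "d - 1 = p ^ l * t4"
    by (meson dvdE)
  show ?thesis
    by (rule that[of t1 t2 t3 t4]) (simp add: fields flip: t)
qed

lemma level_digit:
  assumes "l < k" "[e = c + p ^ l * u] (mod p ^ Suc l)"
  shows "((e mod p ^ k - c) div p ^ l) mod p = u mod p"
proof (rule div_mod_eq_if_cong)
  have "[e mod p ^ k = e] (mod p ^ Suc l)"
    using assms(1) le_imp_power_dvd[of "Suc l" k p] cong_dvd_modulus cong_mod_left cong_refl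
    by (metis Suc_leI)
  with assms(2) show "[e mod p ^ k = c + p ^ l * u] (mod p ^ l * p)"
    by (simp add: mult.commute cong_trans)
qed (use p_gt_1 in simp)

lemma level_coords_mult:
  assumes l: "1 \<le> l" "l < k" and x: "x \<in> congruence_subgroup l" and y: "y \<in> congruence_subgroup l"
  shows "level_coords l (mat_mult_mod (p ^ k) x y) = level_coords l x \<otimes>\<^bsub>Cp3\<^esub> level_coords l y"
proof -
  define q where "q = p ^ l"
  obtain \<alpha>1 \<alpha>2 \<alpha>3 \<alpha>4 where \<alpha>: "x = (1 + q * \<alpha>1, q * \<alpha>2, q * \<alpha>3, 1 + q * \<alpha>4)"
    using congruence_subgroup_elem[OF x] unfolding q_def .
  obtain \<beta>1 \<beta>2 \<beta>3 \<beta>4 where \<beta>: "y = (1 + q * \<beta>1, q * \<beta>2, q * \<beta>3, 1 + q * \<beta>4)"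
    using congruence_subgroup_elem[OF y] unfolding q_def .
  have "q \<noteq> 0"
    using p_gt_1 by (simp add: q_def)
  \<comment> \<open>the terms of order \<open>q\<^sup>2\<close> vanish modulo \<open>p ^ Suc l\<close> because \<open>l \<ge> 1\<close>\<close>
  have digit: "((e mod p ^ k - c) div q) mod p = u mod p" if "e = c + q * u + q * q * v" for e c u v
  proof -
    have "p ^ Suc l dvd q * q"
      using l(1) le_imp_power_dvd[of "Suc l" "l + l" p] by (simp add: q_def power_add)
    then have "[e = c + q * u] (mod p ^ Suc l)"
      using that by (simp add: cong_iff_dvd_diff)
    then show ?thesis
      using level_digit[OF l(2)] by (simp add: q_def)
  qed
  have "level_coords l (mat_mult_mod (p ^ k) x y) =
      ((\<alpha>1 + \<beta>1) mod p, (\<alpha>2 + \<beta>2) mod p, (\<alpha>3 + \<beta>3) mod p)"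
    using digit[of "(1 + q * \<alpha>1) * (1 + q * \<beta>1) + q * \<alpha>2 * (q * \<beta>3)" 1 "\<alpha>1 + \<beta>1" "\<alpha>1 * \<beta>1 + \<alpha>2 * \<beta>3"]
      digit[of "(1 + q * \<alpha>1) * (q * \<beta>2) + q * \<alpha>2 * (1 + q * \<beta>4)" 0 "\<alpha>2 + \<beta>2" "\<alpha>1 * \<beta>2 + \<alpha>2 * \<beta>4"]
      digit[of "q * \<alpha>3 * (1 + q * \<beta>1) + (1 + q * \<alpha>4) * (q * \<beta>3)" 0 "\<alpha>3 + \<beta>3" "\<alpha>3 * \<beta>1 + \<alpha>4 * \<beta>3"]
    unfolding \<alpha> \<beta> mat_mult_mod_simps level_coords_def q_def[symmetric]
    by (simp add: algebra_simps)
  also have "\<dots> = level_coords l x \<otimes>\<^bsub>Cp3\<^esub> level_coords l y"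
    using \<open>q \<noteq> 0\<close> p_gt_1 by (simp add: \<alpha> \<beta> level_coords_def q_def[symmetric] mult_Cp3 mod_simps)
  finally show ?thesis .
qed

lemma level_coords_eq_0_iff:
  assumes l: "l < k" and x: "x \<in> congruence_subgroup l"
  shows "level_coords l x = (0, 0, 0) \<longleftrightarrow> x \<in> congruence_subgroup (Suc l)"
proof -
  define q where "q = p ^ l"
  obtain \<alpha>1 \<alpha>2 \<alpha>3 \<alpha>4 where \<alpha>: "x = (1 + q * \<alpha>1, q * \<alpha>2, q * \<alpha>3, 1 + q * \<alpha>4)"
    using congruence_subgroup_elem[OF x] unfolding q_def .
  have "q \<noteq> 0"
    using p_gt_1 by (simp add: q_def)
  then have dvd_iff: "p ^ Suc l dvd q * t \<longleftrightarrow> p dvd t"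
    and cong_iff: "[1 + q * t = 1] (mod p ^ Suc l) \<longleftrightarrow> p dvd t" for t
    using p_gt_1 by (simp_all add: q_def cong_iff_dvd_diff mult.commute[of p])
  have carrier: "x \<in> carrier (SL2 (p ^ k))"
    using x congruence_subgroup_subset_carrier by blast
  have "[(1 + q * \<alpha>1) * (1 + q * \<alpha>4) - q * \<alpha>2 * (q * \<alpha>3) = 1] (mod p ^ Suc l)"
    using carrier l le_imp_power_dvd[of "Suc l" k p] cong_dvd_modulus
    by (auto simp: \<alpha> carrier_SL2)
  then have "p dvd \<alpha>4" if "p dvd \<alpha>1" "p dvd \<alpha>2"
    using cong_det_one_diagonal that cong_iff dvd_iff by metis
  moreover have "x \<in> congruence_subgroup (Suc l) \<longleftrightarrow> p dvd \<alpha>1 \<and> p dvd \<alpha>2 \<and> p dvd \<alpha>3 \<and> p dvd \<alpha>4"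
    using carrier unfolding \<alpha> mem_congruence_subgroup cong_iff dvd_iff by simp
  moreover have "level_coords l x = (\<alpha>1 mod p, \<alpha>2 mod p, \<alpha>3 mod p)"
    using \<open>q \<noteq> 0\<close> by (simp add: \<alpha> level_coords_def q_def[symmetric])
  ultimately show ?thesis
    by auto
qed

lemma congruence_subgroup_lift:
  assumes "1 \<le> l" "l \<le> k"
  shows "\<exists>d. ((1 + p ^ l * x1) mod p ^ k, (p ^ l * x2) mod p ^ k, (p ^ l * x3) mod p ^ k, d)
               \<in> congruence_subgroup l"
proof -
  define q where "q = p ^ l"
  define m where "m = p ^ k"
  have "m > 1" "q dvd m"
    using assms power_gt_1 le_imp_power_dvd by (auto simp: q_def m_def)
  have "p dvd q"
    using assms(1) le_imp_power_dvd[of 1 l p] by (simp add: q_def)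
  then have "\<not> p dvd 1 + q * x1"
    using prime by (metis dvd_add_left_iff dvd_mult2 not_prime_unit)
  then have "coprime (1 + q * x1) m"
    using prime by (simp add: m_def prime_imp_coprime coprime_commute)
  define d where "d = inv_modm m (1 + q * x1) * (1 + q * x2 * (q * x3))"
  have "[(1 + q * x1) * d - q * x2 * (q * x3) = 1 * (1 + q * x2 * (q * x3)) - q * x2 * (q * x3)] (mod m)"
    unfolding d_def mult.assoc[symmetric]
    by (intro cong_diff cong_mult cong_refl inv_modm_correct) fact+
  then have det: "[(1 + q * x1) mod m * (d mod m) - (q * x2) mod m * ((q * x3) mod m) = 1] (mod m)"
    using det_mod_cong[of "1 + q * x1" m d "q * x2" "q * x3"] by (simp add: cong_trans)
  have "[(1 + q * x1) mod m = 1 + q * x1] (mod q)"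
    using cong_dvd_modulus[OF cong_mod_left[THEN iffD2, OF cong_refl] \<open>q dvd m\<close>] .
  moreover have "[1 + q * x1 = 1] (mod q)"
    by (simp add: cong_iff_dvd_diff)
  ultimately have "[(1 + q * x1) mod m = 1] (mod q)"
    by (rule cong_trans)
  moreover have "q dvd (q * x2) mod m" "q dvd (q * x3) mod m"
    using \<open>q dvd m\<close> by (simp_all add: dvd_mod_iff)
  moreover have "[d mod m = 1] (mod q)"
    using cong_det_one_diagonal[OF cong_dvd_modulus[OF det \<open>q dvd m\<close>]] calculation by blast
  ultimately show ?thesis
    using det \<open>m > 1\<close> unfolding q_def m_def
    by (intro exI[of _ "d mod p ^ k"]) (simp add: mem_congruence_subgroup carrier_SL2)
qed

lemma level_coords_surj:
  assumes l: "1 \<le> l" "l < k"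
  shows "level_coords l ` congruence_subgroup l = carrier Cp3"
proof
  show "level_coords l ` congruence_subgroup l \<subseteq> carrier Cp3"
    using level_coords_in_carrier by blast
next
  show "carrier Cp3 \<subseteq> level_coords l ` congruence_subgroup l"
  proof
    fix z assume "z \<in> carrier Cp3"
    then obtain x1 x2 x3 where z: "z = (x1, x2, x3)" and range: "x1 \<in> {0..<p}" "x2 \<in> {0..<p}" "x3 \<in> {0..<p}"
      by (auto simp: DirProd_def carrier_cyc)
    obtain d where M: "((1 + p ^ l * x1) mod p ^ k, (p ^ l * x2) mod p ^ k, (p ^ l * x3) mod p ^ k, d)
        \<in> congruence_subgroup l"
      using congruence_subgroup_lift l by (meson less_imp_le)
    have "level_coords l ((1 + p ^ l * x1) mod p ^ k, (p ^ l * x2) mod p ^ k, (p ^ l * x3) mod p ^ k, d) = z"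
      using level_digit[OF l(2), of _ 1 x1] level_digit[OF l(2), of _ 0 x2] level_digit[OF l(2), of _ 0 x3]
        range z
      by (simp add: level_coords_def)
    with M show "z \<in> level_coords l ` congruence_subgroup l"
      by force
  qed
qed

lemma group_hom_level_coords:
  assumes "1 \<le> l" "l < k"
  shows "group_hom ((SL2 (p ^ k))\<lparr>carrier := congruence_subgroup l\<rparr>) Cp3 (level_coords l)"
proof -
  have "group ((SL2 (p ^ k))\<lparr>carrier := congruence_subgroup l\<rparr>)"
    using assms normal_congruence_subgroup[of l] group_SL2[OF power_gt_1, of k]
    by (simp add: normal_imp_subgroup subgroup.subgroup_is_group)
  moreover have "level_coords l \<in> hom ((SL2 (p ^ k))\<lparr>carrier := congruence_subgroup l\<rparr>) Cp3"
    using assms level_coords_in_carrier level_coords_mult by (auto intro!: homI)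
  ultimately show ?thesis
    by (simp add: group_hom_def group_hom_axioms_def DirProd_group)
qed

lemma congruence_quotient_iso:
  assumes "1 \<le> l" "l < k"
  shows "(SL2 (p ^ k))\<lparr>carrier := congruence_subgroup l\<rparr> Mod congruence_subgroup (Suc l) \<cong> Cp3"
proof -
  have "kernel ((SL2 (p ^ k))\<lparr>carrier := congruence_subgroup l\<rparr>) Cp3 (level_coords l) = congruence_subgroup (Suc l)"
    using assms level_coords_eq_0_iff congruence_subgroup_antimono[of l "Suc l"]
    by (auto simp: kernel_def DirProd_def)
  moreover have "level_coords l ` carrier ((SL2 (p ^ k))\<lparr>carrier := congruence_subgroup l\<rparr>) = carrier Cp3"
    using level_coords_surj[OF assms] by simp
  ultimately show ?thesis
    using group_hom.FactGroup_iso[OF group_hom_level_coords[OF assms]] by simp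
qed

lemma congruence_subgroup_psubset:
  assumes "1 \<le> l" "l < k"
  shows "congruence_subgroup (Suc l) \<subset> congruence_subgroup l"
proof -
  have "(1, 0, 0) \<in> carrier Cp3"
    using p_gt_1 by (simp add: DirProd_def carrier_cyc)
  then obtain x where x: "x \<in> congruence_subgroup l" "level_coords l x = (1, 0, 0)"
    using level_coords_surj[OF assms] by (metis imageE)
  then have "x \<notin> congruence_subgroup (Suc l)"
    using level_coords_eq_0_iff[OF assms(2) x(1)] x(2) by simp
  then show ?thesis
    using x congruence_subgroup_antimono[of l "Suc l"] by auto
qed

end

section \<open>The subgroup P and the Teichmuller monomial matrices\<close>

locale SL2_odd_prime_power = SL2_prime_power +
  assumes odd: "odd p" and k_ge_2: "k \<ge> 2"
begin

lemma p_ge_3: "p \<ge> 3"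
  using p_gt_1 odd by (cases "p = 2") auto

definition q :: int where
  "q = p ^ (k - 1)"

lemma power_k_eq: "p ^ k = q * p"
  using k_ge_2 unfolding q_def by (metis Suc_diff_1 less_le_trans pos2 power_Suc2)

lemma power_k_dvd_square: "p ^ k dvd q * q"
  using k_ge_2 le_imp_power_dvd[of k "(k - 1) + (k - 1)" p] by (simp add: q_def flip: power_add)

lemma p_dvd_q: "p dvd q"
  using k_ge_2 le_imp_power_dvd[of 1 "k - 1" p] by (simp add: q_def)

lemma q_pos: "q > 0"
  using p_gt_1 by (simp add: q_def)

lemma power_k_gt_1: "p ^ k > 1"
  using k_ge_2 power_gt_1 by simp

definition P_elem :: "int \<Rightarrow> int \<Rightarrow> mat2" where
  "P_elem u v = (1, q * u, q * v, 1)"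

lemma Pgrp_eq: "Pgrp p k = (\<lambda>(u, v). P_elem u v) ` ({0..<p} \<times> {0..<p})"
proof -
  have mod_eq: "(q * b) mod p ^ k = q * (b mod p)" for b
    unfolding power_k_eq by (rule mod_mult_mult1)
  have "{0..<p} \<subseteq> {0..<p ^ k}"
    using k_ge_2 p_gt_1 self_le_power[of p k] by auto
  moreover have "1 mod p ^ k = 1"
    using power_k_gt_1 by simp
  ultimately show ?thesis
  proof (intro equalityI subsetI)
    fix x assume "x \<in> Pgrp p k"
    then obtain b c where "x = (1, q * (b mod p), q * (c mod p), 1)"
      unfolding Pgrp_def q_def[symmetric] mod_eq \<open>1 mod p ^ k = 1\<close> by blast
    moreover have "(b mod p, c mod p) \<in> {0..<p} \<times> {0..<p}"
      using p_gt_1 by simp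
    ultimately show "x \<in> (\<lambda>(u, v). P_elem u v) ` ({0..<p} \<times> {0..<p})"
      unfolding P_elem_def by force
  next
    fix x assume "x \<in> (\<lambda>(u, v). P_elem u v) ` ({0..<p} \<times> {0..<p})"
    then obtain u v where "x = P_elem u v" "u \<in> {0..<p}" "v \<in> {0..<p}"
      by auto
    moreover from this have "x = (1 mod p ^ k, (q * u) mod p ^ k, (q * v) mod p ^ k, 1 mod p ^ k)"
      unfolding P_elem_def mod_eq \<open>1 mod p ^ k = 1\<close> by simp
    ultimately show "x \<in> Pgrp p k"
      using \<open>{0..<p} \<subseteq> {0..<p ^ k}\<close> unfolding Pgrp_def q_def[symmetric] by blast
  qed
qed

abbreviation Cp2 :: "(int \<times> int) monoid" where
  "Cp2 \<equiv> cyc (nat p) \<times>\<times> cyc (nat p)"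

lemma P_elem_mult:
  "mat_mult_mod (p ^ k) (P_elem u v) (P_elem u' v') = P_elem ((u + u') mod p) ((v + v') mod p)"
proof -
  have one: "(1 + q * s * (q * t)) mod p ^ k = 1" for s t
  proof -
    have "p ^ k dvd q * s * (q * t)"
      using power_k_dvd_square dvd_mult2[of _ "q * q" "s * t"] by (simp add: algebra_simps)
    then show ?thesis
      using power_k_gt_1 by (simp add: mod_add_right_eq[of 1, symmetric])
  qed
  have sum: "(q * s + q * t) mod p ^ k = q * ((s + t) mod p)" for s t
    unfolding power_k_eq distrib_left[symmetric] by (rule mod_mult_mult1)
  show ?thesis
    using one[of u v'] one[of v u'] sum[of u u'] sum[of v v']
    unfolding P_elem_def mat_mult_mod_simps by (simp add: add.commute mult.commute)
qed

lemma P_elem_in_carrier: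
  assumes "u \<in> {0..<p}" "v \<in> {0..<p}"
  shows "P_elem u v \<in> carrier (SL2 (p ^ k))"
proof -
  have "q * t \<in> {0..<p ^ k}" if "t \<in> {0..<p}" for t
    using that q_pos unfolding power_k_eq by auto
  moreover have "p ^ k dvd q * u * (q * v)"
    using power_k_dvd_square dvd_mult2[of _ _ "u * v"] by (simp add: algebra_simps)
  ultimately show ?thesis
    using assms power_k_gt_1 by (simp add: P_elem_def carrier_SL2 cong_iff_dvd_diff)
qed

lemma hom_P_elem: "(\<lambda>(u, v). P_elem u v) \<in> hom Cp2 (SL2 (p ^ k))"
proof (rule homI)
  fix x y assume "x \<in> carrier Cp2" "y \<in> carrier Cp2"
  then show "(case x of (u, v) \<Rightarrow> P_elem u v) \<in> carrier (SL2 (p ^ k))"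
    and "(case x \<otimes>\<^bsub>Cp2\<^esub> y of (u, v) \<Rightarrow> P_elem u v) =
          (case x of (u, v) \<Rightarrow> P_elem u v) \<otimes>\<^bsub>SL2 (p ^ k)\<^esub> (case y of (u, v) \<Rightarrow> P_elem u v)"
    using p_gt_1 P_elem_in_carrier
    by (auto simp: DirProd_def carrier_cyc P_elem_mult split: prod.splits)
qed

lemma subgroup_Pgrp: "subgroup (Pgrp p k) (SL2 (p ^ k))"
proof -
  have "group_hom Cp2 (SL2 (p ^ k)) (\<lambda>(u, v). P_elem u v)"
    using hom_P_elem group_SL2[OF power_gt_1, of k] k_ge_2
    by (simp add: group_hom_def group_hom_axioms_def DirProd_group)
  then show ?thesis
    using group_hom.img_is_subgroup p_gt_1 by (fastforce simp: Pgrp_eq DirProd_def carrier_cyc)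
qed

lemma Pgrp_iso: "(SL2 (p ^ k))\<lparr>carrier := Pgrp p k\<rparr> \<cong> Cp2"
proof -
  have "inj_on (\<lambda>(u, v). P_elem u v) (carrier Cp2)"
    using q_pos by (auto intro!: inj_onI simp: P_elem_def)
  moreover have "(\<lambda>(u, v). P_elem u v) ` carrier Cp2 = Pgrp p k"
    using p_gt_1 by (simp add: Pgrp_eq DirProd_def carrier_cyc)
  ultimately have "(\<lambda>(u, v). P_elem u v) \<in> iso Cp2 ((SL2 (p ^ k))\<lparr>carrier := Pgrp p k\<rparr>)"
    using hom_P_elem by (auto simp: iso_def bij_betw_def hom_def)
  then show ?thesis
    using group.iso_sym[OF DirProd_group[OF group_integer_mod_group group_integer_mod_group]]
    by (auto simp: is_iso_def)
qed

lemma Pgrp_subset_congruence_subgroup_1: "Pgrp p k \<subseteq> congruence_subgroup 1"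
  using P_elem_in_carrier p_dvd_q
  by (auto simp: Pgrp_eq P_elem_def mem_congruence_subgroup)

lemma congruence_subgroup_1_inter_centre: "congruence_subgroup 1 \<inter> centre_pm (p ^ k) \<subseteq> {\<one>\<^bsub>SL2 (p ^ k)\<^esub>}"
proof -
  have "\<not> [p ^ k - 1 = 1] (mod p)"
  proof
    assume "[p ^ k - 1 = 1] (mod p)"
    moreover have "[p ^ k - 1 = 0 - 1] (mod p)"
      using k_ge_2 by (intro cong_diff cong_refl) (simp add: cong_0_iff)
    ultimately have "p dvd 2"
      by (metis cong_iff_dvd_diff cong_sym cong_trans diff_0 diff_minus_eq_add one_add_one)
    then show False
      using p_ge_3 by (auto dest: zdvd_imp_le)
  qed
  then show ?thesis
    using power_k_gt_1 by (auto simp: centre_pm_eq mem_congruence_subgroup one_SL2)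
qed

lemma centre_quotient_congruence_subgroup_1_iso:
  "(SL2 (p ^ k) Mod centre_pm (p ^ k))\<lparr>carrier := (\<lambda>g. centre_pm (p ^ k) #>\<^bsub>SL2 (p ^ k)\<^esub> g) ` congruence_subgroup 1\<rparr>
     \<cong> (SL2 (p ^ k))\<lparr>carrier := congruence_subgroup 1\<rparr>"
  using group.FactGroup_image_iso[OF group_SL2 normal_centre_pm] normal_congruence_subgroup[of 1]
    power_k_gt_1 k_ge_2 congruence_subgroup_1_inter_centre
  by (simp add: normal_imp_subgroup)

lemma centre_quotient_Pgrp_iso:
  "(SL2 (p ^ k) Mod centre_pm (p ^ k))\<lparr>carrier := (\<lambda>g. centre_pm (p ^ k) #>\<^bsub>SL2 (p ^ k)\<^esub> g) ` Pgrp p k\<rparr> \<cong> Cp2"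
proof -
  have "Pgrp p k \<inter> centre_pm (p ^ k) \<subseteq> {\<one>\<^bsub>SL2 (p ^ k)\<^esub>}"
    using Pgrp_subset_congruence_subgroup_1 congruence_subgroup_1_inter_centre by blast
  then show ?thesis
    using group.FactGroup_image_iso[OF group_SL2 normal_centre_pm subgroup_Pgrp] power_k_gt_1
      iso_trans Pgrp_iso
    by blast
qed

definition teichmuller :: "int \<Rightarrow> bool" where
  "teichmuller a \<longleftrightarrow> [a ^ nat (p - 1) = 1] (mod p ^ k)"

lemma teichmuller_mod [simp]: "teichmuller (a mod p ^ k) \<longleftrightarrow> teichmuller a"
  unfolding teichmuller_def using cong_pow cong_mod_left cong_refl cong_sym cong_trans by metis

lemma teichmuller_uminus [simp]: "teichmuller (- a) \<longleftrightarrow> teichmuller a"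
proof -
  have "even (nat (p - 1))"
    using odd p_gt_1 by (simp add: even_nat_iff)
  then show ?thesis
    by (simp add: teichmuller_def)
qed

lemma teichmuller_one [simp]: "teichmuller 1"
  by (simp add: teichmuller_def)

lemma teichmuller_minus_one: "teichmuller (p ^ k - 1)"
  using teichmuller_mod[of "-1"] power_k_gt_1 by (simp add: zmod_minus1)

lemma teichmuller_mult_add:
  assumes "teichmuller u" "teichmuller v" "p ^ k dvd w"
  shows "teichmuller (u * v + w)" and "teichmuller (w + u * v)"
proof -
  have "[(u * v + w) ^ nat (p - 1) = (u * v + 0) ^ nat (p - 1)] (mod p ^ k)"
    using assms(3) by (intro cong_pow cong_add cong_refl) (simp add: cong_0_iff)
  moreover have "[(u * v) ^ nat (p - 1) = 1 * 1] (mod p ^ k)"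
    using assms(1,2) unfolding teichmuller_def power_mult_distrib by (rule cong_mult)
  ultimately show "teichmuller (u * v + w)" "teichmuller (w + u * v)"
    unfolding teichmuller_def by (auto simp: add.commute intro: cong_trans)
qed

lemma teichmuller_inverse:
  assumes "teichmuller w" "[w * v = 1] (mod p ^ k)"
  shows "teichmuller v"
proof -
  have "[w ^ nat (p - 1) * v ^ nat (p - 1) = 1] (mod p ^ k)"
    using cong_pow[OF assms(2)] by (simp add: power_mult_distrib)
  moreover have "[w ^ nat (p - 1) * v ^ nat (p - 1) = 1 * v ^ nat (p - 1)] (mod p ^ k)"
    using assms(1) unfolding teichmuller_def by (intro cong_mult cong_refl)
  ultimately show ?thesis
    unfolding teichmuller_def by (metis cong_sym cong_trans mult_1)
qed

lemma coprime_if_teichmuller: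
  assumes "teichmuller w"
  shows "coprime w (p ^ k)"
proof -
  have "coprime (w ^ nat (p - 1)) (p ^ k)"
    using assms cong_imp_coprime[of 1 "w ^ nat (p - 1)" "p ^ k"] by (simp add: teichmuller_def cong_sym)
  then show ?thesis
    using p_gt_1 by simp
qed

lemma teichmuller_cong_1_imp_eq_1:
  assumes "teichmuller a" "[a = 1] (mod p)" "a \<in> {0..<p ^ k}"
  shows "a = 1"
proof -
  have "\<not> p dvd p - 1"
  proof
    assume "p dvd p - 1"
    then have "p dvd 1"
      using dvd_diff[OF dvd_refl \<open>p dvd p - 1\<close>] by simp
    then show False
      using p_gt_1 zdvd_imp_le[of p 1] by simp
  qed
  then have "\<not> p dvd int (nat (p - 1))"
    using p_gt_1 by simp
  then have "[a = 1] (mod p ^ k)"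
    using cong_one_prime_power_if_cong_pow[OF prime assms(2)] assms(1) unfolding teichmuller_def by blast
  then show ?thesis
    using assms(3) power_k_gt_1 by (auto intro: cong_less_imp_eq_int)
qed

lemma teichmuller_if_ord:
  assumes "w \<in> {0..<p ^ k}" "ord (nat (p ^ k)) (nat w) = nat (p - 1)"
  shows "teichmuller w"
proof -
  have "[nat w ^ nat (p - 1) = 1] (mod nat (p ^ k))"
    using ord_works[of "nat w" "nat (p ^ k)"] assms(2) by simp
  then have "[int (nat w ^ nat (p - 1)) = int 1] (mod int (nat (p ^ k)))"
    by (simp only: cong_int_iff)
  then show ?thesis
    using assms(1) by (simp add: teichmuller_def)
qed

definition teichmuller_diagonal :: "mat2 set" where
  "teichmuller_diagonal = {(a, b, c, d) \<in> carrier (SL2 (p ^ k)).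
     teichmuller a \<and> teichmuller d \<and> q dvd b \<and> q dvd c}"

definition teichmuller_antidiagonal :: "mat2 set" where
  "teichmuller_antidiagonal = {(a, b, c, d) \<in> carrier (SL2 (p ^ k)).
     teichmuller b \<and> teichmuller c \<and> q dvd a \<and> q dvd d}"

lemma q_dvd_mod_iff [simp]: "q dvd x mod p ^ k \<longleftrightarrow> q dvd x"
  unfolding power_k_eq by (simp add: dvd_mod_iff)

lemma teichmuller_entry:
  assumes "teichmuller u" "teichmuller v" "q dvd s" "q dvd t"
  shows "teichmuller (u * v + s * t)" and "teichmuller (s * t + u * v)"
proof -
  have "p ^ k dvd s * t"
    using assms(3,4) power_k_dvd_square mult_dvd_mono dvd_trans by blast
  then show "teichmuller (u * v + s * t)" "teichmuller (s * t + u * v)"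
    using teichmuller_mult_add[OF assms(1,2)] by simp_all
qed

lemma mult_teichmuller_diagonal_antidiagonal:
  shows "x \<in> teichmuller_diagonal \<Longrightarrow> y \<in> teichmuller_diagonal \<Longrightarrow>
           mat_mult_mod (p ^ k) x y \<in> teichmuller_diagonal"
    and "x \<in> teichmuller_diagonal \<Longrightarrow> y \<in> teichmuller_antidiagonal \<Longrightarrow>
           mat_mult_mod (p ^ k) x y \<in> teichmuller_antidiagonal"
    and "x \<in> teichmuller_antidiagonal \<Longrightarrow> y \<in> teichmuller_diagonal \<Longrightarrow>
           mat_mult_mod (p ^ k) x y \<in> teichmuller_antidiagonal"
    and "x \<in> teichmuller_antidiagonal \<Longrightarrow> y \<in> teichmuller_antidiagonal \<Longrightarrow>
           mat_mult_mod (p ^ k) x y \<in> teichmuller_diagonal"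
  using mat_mult_mod_closed[OF _ _ power_k_gt_1, of x y]
  by (cases x; cases y;
      auto simp: teichmuller_diagonal_def teichmuller_antidiagonal_def mat_mult_mod_simps
        intro: teichmuller_entry dvd_add dvd_mult dvd_mult2)+

definition teichmuller_monomial :: "mat2 set" where
  "teichmuller_monomial = teichmuller_diagonal \<union> teichmuller_antidiagonal"

lemma one_in_teichmuller_diagonal: "(1, 0, 0, 1) \<in> teichmuller_diagonal"
  using power_k_gt_1 by (simp add: teichmuller_diagonal_def carrier_SL2)

lemma subgroup_teichmuller_monomial: "subgroup teichmuller_monomial (SL2 (p ^ k))"
proof (rule group.subgroupI[OF group_SL2[OF power_k_gt_1]])
  show carrier: "teichmuller_monomial \<subseteq> carrier (SL2 (p ^ k))"
    by (auto simp: teichmuller_monomial_def teichmuller_diagonal_def teichmuller_antidiagonal_def)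
  show "teichmuller_monomial \<noteq> {}"
    using one_in_teichmuller_diagonal by (auto simp: teichmuller_monomial_def)
  fix x y assume x: "x \<in> teichmuller_monomial" and y: "y \<in> teichmuller_monomial"
  show "x \<otimes>\<^bsub>SL2 (p ^ k)\<^esub> y \<in> teichmuller_monomial"
    using x y mult_teichmuller_diagonal_antidiagonal[of x y]
    unfolding teichmuller_monomial_def mult_SL2 by blast
  obtain a b c d where abcd: "x = (a, b, c, d)"
    by (cases x)
  with x carrier have "inv\<^bsub>SL2 (p ^ k)\<^esub> x = (d, (- b) mod p ^ k, (- c) mod p ^ k, a)"
    and "(d, (- b) mod p ^ k, (- c) mod p ^ k, a) \<in> carrier (SL2 (p ^ k))"
    using inv_SL2[OF power_k_gt_1] SL2_adjugate(1) by auto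
  with x abcd show "inv\<^bsub>SL2 (p ^ k)\<^esub> x \<in> teichmuller_monomial"
    by (auto simp: teichmuller_monomial_def teichmuller_diagonal_def teichmuller_antidiagonal_def)
qed

lemma Qgens_subset_teichmuller_monomial:
  assumes "w \<in> {0..<p ^ k}" "teichmuller w"
  shows "Qgens (p ^ k) w \<subseteq> teichmuller_monomial"
proof -
  have "(w, 0, 0, inv_modm (p ^ k) w) \<in> teichmuller_diagonal"
    using assms inv_modm_correct[OF coprime_if_teichmuller[OF assms(2)] power_k_gt_1] teichmuller_inverse
    by (auto simp: teichmuller_diagonal_def carrier_SL2)
  moreover have "(0, 1, (-1) mod p ^ k, 0) \<in> teichmuller_antidiagonal"
    using power_k_gt_1 teichmuller_minus_one
    by (auto simp: teichmuller_antidiagonal_def carrier_SL2 cong_iff_dvd_diff zmod_minus1)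
  ultimately show ?thesis
    using assms(1) power_k_gt_1 by (simp add: Qgens_def teichmuller_monomial_def)
qed

lemma Pgrp_subset_teichmuller_diagonal: "Pgrp p k \<subseteq> teichmuller_diagonal"
  using P_elem_in_carrier by (auto simp: Pgrp_eq P_elem_def teichmuller_diagonal_def)

lemma centre_subset_teichmuller_diagonal: "centre_pm (p ^ k) \<subseteq> teichmuller_diagonal"
  using one_in_teichmuller_diagonal teichmuller_minus_one power_k_gt_1 normal_centre_pm[OF power_k_gt_1]
  by (auto simp: centre_pm_eq teichmuller_diagonal_def dest: normal_imp_subgroup subgroup.mem_carrier)

lemma generate_subset_teichmuller_monomial:
  assumes "w \<in> {0..<p ^ k}" "teichmuller w"
  shows "generate (SL2 (p ^ k)) (Pgrp p k \<union> Qgens (p ^ k) w) \<subseteq> teichmuller_monomial"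
proof (rule group.generate_subgroup_incl[OF group_SL2[OF power_k_gt_1] _ subgroup_teichmuller_monomial])
  show "Pgrp p k \<union> Qgens (p ^ k) w \<subseteq> teichmuller_monomial"
    using Qgens_subset_teichmuller_monomial[OF assms] Pgrp_subset_teichmuller_diagonal
    by (auto simp: teichmuller_monomial_def)
qed

lemma teichmuller_monomial_inter_congruence_subgroup_1:
  "teichmuller_monomial \<inter> congruence_subgroup 1 \<subseteq> Pgrp p k"
proof
  fix x assume x: "x \<in> teichmuller_monomial \<inter> congruence_subgroup 1"
  obtain a b c d where abcd: "x = (a, b, c, d)"
    by (cases x)
  with x have K: "[a = 1] (mod p)" "[d = 1] (mod p)" and carrier: "x \<in> carrier (SL2 (p ^ k))"
    by (auto simp: mem_congruence_subgroup)
  have "x \<notin> teichmuller_antidiagonal"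
  proof
    assume "x \<in> teichmuller_antidiagonal"
    then have "p dvd a"
      using p_dvd_q abcd by (auto simp: teichmuller_antidiagonal_def intro: dvd_trans)
    with K(1) show False
      using p_gt_1 by (auto simp: cong_def)
  qed
  with x abcd have diag: "teichmuller a" "teichmuller d" "q dvd b" "q dvd c"
    by (auto simp: teichmuller_monomial_def teichmuller_diagonal_def)
  have range: "a \<in> {0..<p ^ k}" "b \<in> {0..<p ^ k}" "c \<in> {0..<p ^ k}" "d \<in> {0..<p ^ k}"
    using carrier abcd by (auto simp: carrier_SL2)
  obtain u v where "b = q * u" "c = q * v"
    using diag(3,4) by (meson dvdE)
  moreover from this have "u \<in> {0..<p}" "v \<in> {0..<p}"
    using range(2,3) q_pos unfolding power_k_eq by (auto simp: zero_le_mult_iff)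
  moreover have "a = 1" "d = 1"
    using teichmuller_cong_1_imp_eq_1 diag(1,2) K range(1,4) by auto
  ultimately show "x \<in> Pgrp p k"
    using abcd by (auto simp: Pgrp_eq P_elem_def)
qed

lemma centre_cosets_generate_inter_congruence_subgroup_1:
  assumes "w \<in> {0..<p ^ k}" "teichmuller w"
  defines "coset \<equiv> \<lambda>g. centre_pm (p ^ k) #>\<^bsub>SL2 (p ^ k)\<^esub> g"
  shows "coset ` generate (SL2 (p ^ k)) (Pgrp p k \<union> Qgens (p ^ k) w) \<inter> coset ` congruence_subgroup 1
    = coset ` Pgrp p k"
proof (intro equalityI subsetI)
  fix C assume "C \<in> coset ` generate (SL2 (p ^ k)) (Pgrp p k \<union> Qgens (p ^ k) w) \<inter> coset ` congruence_subgroup 1"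
  then obtain g h where g: "g \<in> generate (SL2 (p ^ k)) (Pgrp p k \<union> Qgens (p ^ k) w)"
    and h: "h \<in> congruence_subgroup 1" and C: "C = coset g" "C = coset h"
    by blast
  interpret SL2: group "SL2 (p ^ k)"
    using group_SL2[OF power_k_gt_1] .
  have centre: "subgroup (centre_pm (p ^ k)) (SL2 (p ^ k))"
    using normal_centre_pm[OF power_k_gt_1] by (rule normal_imp_subgroup)
  have "h \<in> carrier (SL2 (p ^ k))"
    using h congruence_subgroup_subset_carrier by blast
  then have "h \<in> coset g"
    using SL2.rcos_self[OF _ centre] C by (metis coset_def)
  then obtain z where z: "z \<in> centre_pm (p ^ k)" and hzg: "h = z \<otimes>\<^bsub>SL2 (p ^ k)\<^esub> g"
    unfolding coset_def r_coset_def by blast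
  have "z \<in> teichmuller_monomial" "g \<in> teichmuller_monomial"
    using z g generate_subset_teichmuller_monomial[OF assms(1,2)] centre_subset_teichmuller_diagonal
    by (auto simp: teichmuller_monomial_def)
  then have "h \<in> teichmuller_monomial"
    unfolding hzg by (rule subgroup.m_closed[OF subgroup_teichmuller_monomial])
  with h have "h \<in> Pgrp p k"
    using teichmuller_monomial_inter_congruence_subgroup_1 by blast
  with C show "C \<in> coset ` Pgrp p k"
    by blast
next
  fix C assume "C \<in> coset ` Pgrp p k"
  moreover have "Pgrp p k \<subseteq> generate (SL2 (p ^ k)) (Pgrp p k \<union> Qgens (p ^ k) w)"
    by (auto intro: generate.incl)
  ultimately show "C \<in> coset ` generate (SL2 (p ^ k)) (Pgrp p k \<union> Qgens (p ^ k) w) \<inter> coset ` congruence_subgroup 1"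
    using Pgrp_subset_congruence_subgroup_1 by blast
qed

end

theorem lemma3p2:
  fixes p :: int and k :: nat and w :: int
  assumes "Factorial_Ring.prime p" and "odd p" and "k \<ge> 2"
    and "w \<in> {0..<p^k}" and "ord (nat (p^k)) (nat w) = nat (p - 1)"
  defines "Xh \<equiv> SL2 (p^k)"
    and "Z \<equiv> centre_pm (p^k)"
    and "Nh \<equiv> kernel (SL2 (p^k)) (SL2 p) (reduce_mod p)"
    and "Yh \<equiv> generate (SL2 (p^k)) (Pgrp p k \<union> Qgens (p^k) w)"
  shows "(Xh Mod Z)\<lparr>carrier := (\<lambda>g. Z #>\<^bsub>Xh\<^esub> g) ` Nh\<rparr> \<cong> Xh\<lparr>carrier := Nh\<rparr>
    \<and> (\<exists>Ns :: nat \<Rightarrow> mat2 set.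
           Ns 1 = Nh \<and> Ns k = {\<one>\<^bsub>Xh\<^esub>}
           \<and> (\<forall>l \<in> {1..k}. Ns l \<lhd> Xh)
           \<and> (\<forall>l \<in> {1..<k}. Ns (Suc l) \<subset> Ns l
                 \<and> (Xh\<lparr>carrier := Ns l\<rparr> Mod Ns (Suc l)) \<cong> (cyc (nat p) \<times>\<times> cyc (nat p) \<times>\<times> cyc (nat p))))
    \<and> (\<lambda>g. Z #>\<^bsub>Xh\<^esub> g) ` Yh \<inter> (\<lambda>g. Z #>\<^bsub>Xh\<^esub> g) ` Nh = (\<lambda>g. Z #>\<^bsub>Xh\<^esub> g) ` Pgrp p k
    \<and> (Xh Mod Z)\<lparr>carrier := (\<lambda>g. Z #>\<^bsub>Xh\<^esub> g) ` Pgrp p k\<rparr> \<cong> (cyc (nat p) \<times>\<times> cyc (nat p))"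
proof -
  interpret SL2_odd_prime_power p k
    by unfold_locales (use assms(1-3) in auto)
  have Nh: "Nh = congruence_subgroup 1"
    unfolding Nh_def congruence_subgroup_def by simp
  have "\<exists>Ns. Ns 1 = Nh \<and> Ns k = {\<one>\<^bsub>Xh\<^esub>} \<and> (\<forall>l \<in> {1..k}. Ns l \<lhd> Xh)
      \<and> (\<forall>l \<in> {1..<k}. Ns (Suc l) \<subset> Ns l \<and> Xh\<lparr>carrier := Ns l\<rparr> Mod Ns (Suc l) \<cong> Cp3)"
    using k_ge_2 congruence_subgroup_top normal_congruence_subgroup congruence_subgroup_psubset
      congruence_quotient_iso
    by (intro exI[of _ congruence_subgroup]) (auto simp: Nh Xh_def)
  moreover have "teichmuller w"
    using teichmuller_if_ord assms(4,5) .
  ultimately show ?thesis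
    using centre_quotient_congruence_subgroup_1_iso centre_quotient_Pgrp_iso
      centre_cosets_generate_inter_congruence_subgroup_1[OF assms(4)]
    by (simp add: Xh_def Z_def Nh Yh_def)
qed

end
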